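(* Let $H$ be a fixed connected graph, $p_n,q_n\in(0,1)$, and for integers $r\ge1$ let $$\mathcal N_n(r)=\sum_{H_1,\dots,H_r\in\mathcal H_n}p_n^{|V(\bigcup_{a=1}^rH_a)|}q_n^{|E(\bigcup_{a=1}^rH_a)|}\mathbf 1\Big\{\textstyle\bigcup_{a=1}^rH_a\text{ is connected}\Big\}.$$ Then for every integer $r\ge2$, whenever $np_nq_n^{m(H)}\ge1$, $$\mathcal N_n(r)\lesssim_{H,r}\mathcal N_n(r-1)\sqrt{\mathcal N_n(2)}\,\big(np_nq_n^{m(H)}\big)^{-1/2}.$$
   Context: $\mathcal H_n$ is the collection of all labeled subgraphs of the complete graph $K_n$ on $\{1,\dots,n\}$ that are isomorphic to $H$. For graphs $F_1,F_2$, $F_1\cup F_2=(V(F_1)\cup V(F_2),E(F_1)\cup E(F_2))$. $m(H)=\max_{H_1\subseteq H}\frac{|E(H_1)|}{|V(H_1)|}$ over nonempty subgraphs $H_1$ of $H$. $\lesssim_{H,r}$ means up to a constant depending only on $H$ and $r$. *)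

theory Defs
  imports Complex_Main "HOL-Library.FuncSet"
begin

type_synonym 'a graph = "'a set \<times> 'a set set"

definition is_graph :: "'a graph \<Rightarrow> bool" where
  "is_graph G \<longleftrightarrow> finite (fst G) \<and> (\<forall>e\<in>snd G. e \<subseteq> fst G \<and> card e = 2)"

definition connected_graph :: "'a graph \<Rightarrow> bool" where
  "connected_graph G \<longleftrightarrow> fst G \<noteq> {} \<and>
     (\<forall>u\<in>fst G. \<forall>v\<in>fst G. (\<lambda>x y. {x, y} \<in> snd G)\<^sup>*\<^sup>* u v)"

definition subgraph :: "'a graph \<Rightarrow> 'a graph \<Rightarrow> bool" where
  "subgraph G1 G \<longleftrightarrow> fst G1 \<subseteq> fst G \<and> snd G1 \<subseteq> snd G \<and> (\<forall>e\<in>snd G1. e \<subseteq> fst G1)"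

definition graph_iso :: "'a graph \<Rightarrow> 'b graph \<Rightarrow> bool" where
  "graph_iso G G' \<longleftrightarrow> (\<exists>f. bij_betw f (fst G) (fst G') \<and> snd G' = (\<lambda>e. f ` e) ` snd G)"

definition max_density :: "'a graph \<Rightarrow> real" where
  "max_density H = Max {real (card (snd H1)) / real (card (fst H1)) | H1.
                         subgraph H1 H \<and> fst H1 \<noteq> {}}"

definition complete_graph :: "nat \<Rightarrow> nat graph" where
  "complete_graph n = ({1..n}, {e. e \<subseteq> {1..n} \<and> card e = 2})"

definition copies :: "'a graph \<Rightarrow> nat \<Rightarrow> nat graph set" where
  "copies H n = {G. subgraph G (complete_graph n) \<and> graph_iso H G}"

definition union_graph :: "nat \<Rightarrow> (nat \<Rightarrow> 'b graph) \<Rightarrow> 'b graph" where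
  "union_graph r F = ((\<Union>a<r. fst (F a)), (\<Union>a<r. snd (F a)))"

definition NN :: "'a graph \<Rightarrow> nat \<Rightarrow> real \<Rightarrow> real \<Rightarrow> nat \<Rightarrow> real" where
  "NN H n p q r = (\<Sum>F \<in> PiE {..<r} (\<lambda>_. copies H n).
      p ^ card (fst (union_graph r F)) * q ^ card (snd (union_graph r F)) *
      (if connected_graph (union_graph r F) then 1 else 0))"

end

theory Submission
  imports Defs
begin

text \<open>
  Write \<open>v\<close> and \<open>e\<close> for the numbers of vertices and edges of \<open>H\<close>, \<open>m = m(H)\<close> and
  \<open>X = n p q^m\<close>. If the union of \<open>r \<ge> 2\<close> connected copies of \<open>H\<close> is connected, some copy can
  be dropped so that the union of the others is still connected and meets it: drop a copy
  outside a maximal proper subfamily with connected union. Charging every term of \<open>N(r)\<close> to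
  such a copy gives \<open>N(r) \<le> r N(r-1) max M(G)\<close>, where \<open>G\<close> is a union of \<open>r - 1\<close> copies and
  \<open>M(G)\<close> sums \<open>p^|V(b) - V(G)| q^|E(b) - E(G)|\<close> over the copies \<open>b\<close> meeting \<open>G\<close>.
  Grouping the copies \<open>b\<close> by the set \<open>K\<close> of vertices of \<open>H\<close> that are mapped into \<open>V(G)\<close>
  bounds \<open>M(G)\<close> by a constant times the largest \<open>x_K = (np)^(v - |K|) q^(e - e(K))\<close>,
  \<open>K \<noteq> {}\<close>. Since \<open>e(K) \<le> m |K|\<close> and \<open>X \<ge> 1\<close> we have \<open>X \<le> (np)^|K| q^e(K)\<close>, hence
  \<open>x_K^2 X \<le> (np)^(2v - |K|) q^(2e - e(K))\<close>; and this is at most a constant times \<open>N(2)\<close>,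
  as one sees by counting pairs of copies that agree on the image of \<open>K\<close> and are disjoint
  elsewhere. Altogether \<open>M(G)\<close> is at most a constant times \<open>sqrt (N(2) / X)\<close>.
\<close>

section \<open>Unions of graphs\<close>

definition graph_Un :: "'a graph \<Rightarrow> 'a graph \<Rightarrow> 'a graph" where
  "graph_Un G1 G2 = (fst G1 \<union> fst G2, snd G1 \<union> snd G2)"

definition graph_UN :: "'i set \<Rightarrow> ('i \<Rightarrow> 'a graph) \<Rightarrow> 'a graph" where
  "graph_UN A F = ((\<Union>a\<in>A. fst (F a)), (\<Union>a\<in>A. snd (F a)))"

lemma union_graph_eq_graph_UN: "union_graph r F = graph_UN {..<r} F"
  by (simp add: union_graph_def graph_UN_def)

lemma graph_UN_insert: "graph_UN (insert a A) F = graph_Un (F a) (graph_UN A F)"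
  by (simp add: graph_UN_def graph_Un_def)

lemma graph_UN_fun_upd: "a \<notin> A \<Longrightarrow> graph_UN A (F(a := G)) = graph_UN A F"
  by (auto simp: graph_UN_def split: if_split_asm)

lemma graph_UN_fun_upd_remove:
  "a \<in> A \<Longrightarrow> graph_UN A (F(a := y)) = graph_Un y (graph_UN (A - {a}) F)"
  by (auto simp: graph_UN_def graph_Un_def split: if_split_asm)

lemma graph_UN_reindex: "graph_UN (h ` I) F = graph_UN I (F \<circ> h)"
  by (simp add: graph_UN_def)

lemma connected_graph_Un:
  assumes "connected_graph G1" "connected_graph G2" "fst G1 \<inter> fst G2 \<noteq> {}"
  shows "connected_graph (graph_Un G1 G2)"
proof -
  let ?R = "(\<lambda>x y. {x, y} \<in> snd (graph_Un G1 G2))\<^sup>*\<^sup>*"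
  have reach: "?R x y"
    if "connected_graph G" "x \<in> fst G" "y \<in> fst G" "snd G \<subseteq> snd (graph_Un G1 G2)" for G x y
  proof -
    from that have "(\<lambda>x y. {x, y} \<in> snd G)\<^sup>*\<^sup>* x y" by (simp add: connected_graph_def)
    then show ?thesis by (rule rtranclp_mono[THEN predicate2D, rotated]) (use that in auto)
  qed
  obtain w where "w \<in> fst G1" "w \<in> fst G2" using assms(3) by blast
  then have "?R x w" "?R w x" if "x \<in> fst (graph_Un G1 G2)" for x
    using that reach[OF assms(1)] reach[OF assms(2)] by (auto simp: graph_Un_def)
  then show ?thesis
    using \<open>w \<in> fst G1\<close> unfolding connected_graph_def
    by (auto simp: graph_Un_def intro: rtranclp_trans)
qed

text \<open>A path in the union from a vertex covered by the subfamily \<open>S\<close> to a vertex outside it must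
  leave \<open>S\<close> through a vertex that some member of \<open>A - S\<close> shares with \<open>S\<close>.\<close>
lemma connected_graph_UN_crossing:
  assumes conn: "connected_graph (graph_UN A F)" and "S \<subseteq> A"
    and edges: "\<And>c e. c \<in> A \<Longrightarrow> e \<in> snd (F c) \<Longrightarrow> e \<subseteq> fst (F c)"
    and u: "u \<in> fst (graph_UN S F)" and v: "v \<in> fst (graph_UN (A - S) F)"
  shows "\<exists>b\<in>A - S. fst (F b) \<inter> fst (graph_UN S F) \<noteq> {}"
proof (rule ccontr)
  assume disjoint: "\<not> ?thesis"
  have "(\<lambda>x y. {x, y} \<in> snd (graph_UN A F))\<^sup>*\<^sup>* u v"
    using conn u v \<open>S \<subseteq> A\<close> by (auto simp: connected_graph_def graph_UN_def)
  then have "v \<in> fst (graph_UN S F)"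
  proof (induction rule: rtranclp_induct)
    case (step y z)
    then obtain c where "c \<in> A" "{y, z} \<in> snd (F c)" by (auto simp: graph_UN_def)
    with edges have "y \<in> fst (F c)" "z \<in> fst (F c)" by auto
    with step.IH disjoint \<open>c \<in> A\<close> show ?case by (cases "c \<in> S") (auto simp: graph_UN_def)
  qed (use u in simp)
  with v disjoint show False by (auto simp: graph_UN_def)
qed

text \<open>Take a maximal proper subfamily with connected union; the crossing lemma lets it grow
  by one member, so it misses exactly one member \<open>a\<close>, which then meets it.\<close>
lemma connected_graph_UN_leaf:
  assumes "finite A" "2 \<le> card A"
    and conn_F: "\<And>i. i \<in> A \<Longrightarrow> connected_graph (F i)"
    and edges: "\<And>c e. c \<in> A \<Longrightarrow> e \<in> snd (F c) \<Longrightarrow> e \<subseteq> fst (F c)"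
    and conn: "connected_graph (graph_UN A F)"
  shows "\<exists>a\<in>A. connected_graph (graph_UN (A - {a}) F)
                \<and> fst (F a) \<inter> fst (graph_UN (A - {a}) F) \<noteq> {}"
proof -
  define P where "P S \<longleftrightarrow> S \<subset> A \<and> S \<noteq> {} \<and> connected_graph (graph_UN S F)" for S
  obtain i j where ij: "i \<in> A" "j \<in> A" "i \<noteq> j"
    using assms(1,2) card_le_Suc0_iff_eq[of A] by auto
  have "graph_UN {i} F = F i" by (simp add: graph_UN_def)
  with ij conn_F have "P {i}" by (auto simp: P_def)
  moreover have "card S < Suc (card A)" if "P S" for S
    using that \<open>finite A\<close> by (auto simp: P_def less_Suc_eq_le intro: card_mono)
  ultimately obtain S where S: "P S" and max: "\<And>S'. P S' \<Longrightarrow> card S' \<le> card S"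
    using ex_has_greatest_nat[of P "{i}" card "Suc (card A)"] by blast
  have ne: "fst (F c) \<noteq> {}" if "c \<in> A" for c
    using conn_F[OF that] by (simp add: connected_graph_def)
  have "S \<subseteq> A" using S by (auto simp: P_def)
  obtain s b0 where "s \<in> S" "b0 \<in> A - S" using S by (auto simp: P_def)
  then obtain u v where "u \<in> fst (graph_UN S F)" "v \<in> fst (graph_UN (A - S) F)"
    using ne \<open>S \<subseteq> A\<close> by (fastforce simp: graph_UN_def)
  then obtain b where b: "b \<in> A - S" and meet: "fst (F b) \<inter> fst (graph_UN S F) \<noteq> {}"
    using connected_graph_UN_crossing[OF conn \<open>S \<subseteq> A\<close> edges] by blast
  have "connected_graph (graph_UN (insert b S) F)"
    unfolding graph_UN_insert using b S meet conn_F by (intro connected_graph_Un) (auto simp: P_def)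
  moreover have "card (insert b S) = Suc (card S)"
    using b \<open>S \<subseteq> A\<close> \<open>finite A\<close> by (simp add: finite_subset)
  ultimately have "insert b S = A"
    using max[of "insert b S"] b S by (auto simp: P_def)
  then have "A - {b} = S" using b by auto
  with b S meet show ?thesis by (auto simp: P_def)
qed

section \<open>Weighted sums over tuples of copies\<close>

lemma is_graph_finite_edges: "is_graph G \<Longrightarrow> finite (snd G)"
  unfolding is_graph_def by (meson Pow_iff finite_Pow_iff finite_subset subsetI)

lemma is_graph_graph_UN:
  "finite A \<Longrightarrow> (\<And>i. i \<in> A \<Longrightarrow> is_graph (F i)) \<Longrightarrow> is_graph (graph_UN A F)"
  by (fastforce simp: is_graph_def graph_UN_def)

definition graph_weight :: "real \<Rightarrow> real \<Rightarrow> 'a graph \<Rightarrow> real" where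
  "graph_weight p q G = p ^ card (fst G) * q ^ card (snd G) * (if connected_graph G then 1 else 0)"

definition extension_weight :: "real \<Rightarrow> real \<Rightarrow> 'a graph \<Rightarrow> 'a graph \<Rightarrow> real" where
  "extension_weight p q G b = p ^ card (fst b - fst G) * q ^ card (snd b - snd G)"

lemma graph_weight_nonneg: "0 \<le> p \<Longrightarrow> 0 \<le> q \<Longrightarrow> 0 \<le> graph_weight p q G"
  by (simp add: graph_weight_def)

lemma extension_weight_nonneg: "0 \<le> p \<Longrightarrow> 0 \<le> q \<Longrightarrow> 0 \<le> extension_weight p q G b"
  by (simp add: extension_weight_def)

lemma graph_weight_graph_Un_le:
  assumes "is_graph b" "is_graph G" "connected_graph G" "0 \<le> p" "0 \<le> q"
  shows "graph_weight p q (graph_Un b G) \<le> graph_weight p q G * extension_weight p q G b"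
proof -
  have card_Un: "card (X \<union> Y) = card Y + card (X - Y)" if "finite X" "finite Y" for X Y :: "'b set"
    using that card_Un_disjoint[of Y "X - Y"] by (simp add: Un_commute)
  have "card (fst (graph_Un b G)) = card (fst G) + card (fst b - fst G)"
       "card (snd (graph_Un b G)) = card (snd G) + card (snd b - snd G)"
    using assms(1,2) is_graph_finite_edges[OF assms(1)] is_graph_finite_edges[OF assms(2)]
    by (auto simp: graph_Un_def is_graph_def card_Un)
  then show ?thesis
    using assms(3-5) by (simp add: graph_weight_def extension_weight_def power_add mult_ac)
qed

lemma NN_eq_sum_graph_weight:
  "NN H n p q r = (\<Sum>F\<in>PiE {..<r} (\<lambda>_. copies H n). graph_weight p q (graph_UN {..<r} F))"
  by (simp add: NN_def graph_weight_def union_graph_eq_graph_UN)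

lemma NN_nonneg: "0 \<le> p \<Longrightarrow> 0 \<le> q \<Longrightarrow> 0 \<le> NN H n p q r"
  unfolding NN_eq_sum_graph_weight by (intro sum_nonneg graph_weight_nonneg)

lemma sum_PiE_remove:
  assumes "a \<in> A"
  shows "(\<Sum>F\<in>PiE A C. f F) = (\<Sum>y\<in>C a. \<Sum>G\<in>PiE (A - {a}) C. f (G(a := y)))"
proof -
  have "PiE A C = (\<lambda>(y, g). g(a := y)) ` (C a \<times> PiE (A - {a}) C)"
    using PiE_insert_eq[of a "A - {a}" C] assms by (simp add: insert_absorb)
  moreover have "inj_on (\<lambda>(y, g). g(a := y)) (C a \<times> PiE (A - {a}) C)"
    by (rule inj_combinator) simp
  ultimately show ?thesis
    by (simp add: sum.reindex sum.cartesian_product case_prod_unfold)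
qed

lemma graph_UN_restrict: "graph_UN A (restrict F A) = graph_UN A F"
  by (simp add: graph_UN_def)

lemma sum_PiE_graph_UN_bij:
  assumes "bij_betw h I J"
  shows "(\<Sum>F\<in>PiE J (\<lambda>_. C). g (graph_UN J F)) = (\<Sum>F\<in>PiE I (\<lambda>_. C). g (graph_UN I F))"
proof (rule sum.reindex_bij_witness[where i = "\<lambda>F. restrict (F \<circ> inv_into I h) J"
                                         and j = "\<lambda>F. restrict (F \<circ> h) I"])
  have J: "J = h ` I" and inj: "inj_on h I" using assms by (auto simp: bij_betw_def)
  show "restrict (restrict (F \<circ> h) I \<circ> inv_into I h) J = F" if F: "F \<in> PiE J (\<lambda>_. C)" for F
  proof
    fix x
    show "restrict (restrict (F \<circ> h) I \<circ> inv_into I h) J x = F x"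
    proof (cases "x \<in> J")
      case True
      then show ?thesis unfolding J by (simp add: inv_into_into f_inv_into_f)
    qed (simp add: PiE_arb[OF F])
  qed
  show "restrict (restrict (F \<circ> inv_into I h) J \<circ> h) I = F" if F: "F \<in> PiE I (\<lambda>_. C)" for F
  proof
    fix x
    show "restrict (restrict (F \<circ> inv_into I h) J \<circ> h) I x = F x"
    proof (cases "x \<in> I")
      case True
      then show ?thesis using inj unfolding J by simp
    qed (simp add: PiE_arb[OF F])
  qed
  show "restrict (F \<circ> h) I \<in> PiE I (\<lambda>_. C)" if "F \<in> PiE J (\<lambda>_. C)" for F
    using that unfolding J by (simp add: PiE_iff)
  show "restrict (F \<circ> inv_into I h) J \<in> PiE J (\<lambda>_. C)" if "F \<in> PiE I (\<lambda>_. C)" for F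
    using that unfolding J by (simp add: PiE_iff inv_into_into)
  show "g (graph_UN I (restrict (F \<circ> h) I)) = g (graph_UN J F)" for F
    by (simp add: graph_UN_restrict graph_UN_reindex J)
qed

lemma NN_eq_sum_PiE:
  assumes "finite A" "card A = r"
  shows "NN H n p q r = (\<Sum>F\<in>PiE A (\<lambda>_. copies H n). graph_weight p q (graph_UN A F))"
proof -
  obtain h where "bij_betw h {..<r} A"
    using assms finite_same_card_bij[of "{..<r}" A] by auto
  then show ?thesis
    unfolding NN_eq_sum_graph_weight by (rule sum_PiE_graph_UN_bij[symmetric])
qed

lemma NN_2_eq:
  "NN H n p q 2 = (\<Sum>a\<in>copies H n. \<Sum>b\<in>copies H n. graph_weight p q (graph_Un a b))"
proof -
  have empty: "{..<2::nat} - {0} - {Suc 0} = {}" by auto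
  show ?thesis
    unfolding NN_eq_sum_graph_weight
    by (simp add: sum_PiE_remove[of 0] sum_PiE_remove[of 1] graph_UN_fun_upd_remove empty)
       (simp add: graph_UN_def graph_Un_def)
qed

lemma powr_density_le_power:
  fixes a q m :: real
  assumes q: "0 < q" "q < 1" and X: "1 \<le> a * q powr m" and "1 \<le> k" and l: "real l \<le> m * real k"
  shows "a * q powr m \<le> a ^ k * q ^ l"
proof -
  have a: "q powr (- m) \<le> a"
    using X q by (simp add: powr_minus_divide divide_le_eq mult.commute)
  then have "0 < a" using q by (smt (verit) powr_gt_zero)
  have "a * q powr m \<le> a * q powr (- m * real (k - 1) + real l)"
    using \<open>0 < a\<close> q l \<open>1 \<le> k\<close>
    by (intro mult_left_mono powr_mono') (auto simp: of_nat_diff algebra_simps)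
  also have "\<dots> = a * (q powr (- m)) ^ (k - 1) * q ^ l"
    using q by (subst powr_add) (simp add: powr_powr mult.assoc flip: powr_realpow)
  also have "\<dots> \<le> a * a ^ (k - 1) * q ^ l"
    using a \<open>0 < a\<close> q by (intro mult_right_mono mult_left_mono power_mono) auto
  also have "\<dots> = a ^ k * q ^ l"
    using \<open>1 \<le> k\<close> by (simp add: power_eq_if)
  finally show ?thesis .
qed

lemma card_inj_funcset_ge:
  assumes "finite D" "finite T"
  shows "(card T - card D) ^ card D \<le> card {h \<in> D \<rightarrow>\<^sub>E T. inj_on h D}"
proof -
  have "(card T - card D) ^ card D = (\<Prod>i\<in>{0..<card D}. card T - card D)" by simp
  also have "\<dots> \<le> (\<Prod>i\<in>{0..<card D}. card T - i)" by (intro prod_mono) auto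
  also have "\<dots> = card {h \<in> D \<rightarrow>\<^sub>E T. inj_on h D}"
    using card_inj_on_subset_funcset[OF assms order_refl] by simp
  finally show ?thesis .
qed

section \<open>Copies of a connected graph as images of embeddings\<close>

locale pattern_graph =
  fixes V :: "'a set" and E :: "'a set set"
  assumes graph: "is_graph (V, E)" and connected: "connected_graph (V, E)"
begin

lemma finite_V: "finite V"
  using graph by (simp add: is_graph_def)

lemma edge_subset: "e \<in> E \<Longrightarrow> e \<subseteq> V"
  using graph by (simp add: is_graph_def)

lemma finite_E: "finite E"
  using is_graph_finite_edges[OF graph] by simp

lemma card_V_pos: "0 < card V"
  using connected finite_V by (simp add: connected_graph_def card_gt_0_iff)

definition embeddings :: "nat \<Rightarrow> ('a \<Rightarrow> nat) set" where
  "embeddings n = {g \<in> V \<rightarrow>\<^sub>E {1..n}. inj_on g V}"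

definition copy_of :: "('a \<Rightarrow> nat) \<Rightarrow> nat graph" where
  "copy_of g = (g ` V, (`) g ` E)"

lemma finite_embeddings: "finite (embeddings n)"
  unfolding embeddings_def using finite_PiE[OF finite_V, of "\<lambda>_. {1..n}"] by simp

lemma embeddingsD: "g \<in> embeddings n \<Longrightarrow> inj_on g V"
  by (simp add: embeddings_def)

lemma card_copy_of:
  assumes "g \<in> embeddings n"
  shows "card (fst (copy_of g)) = card V" "card (snd (copy_of g)) = card E"
proof -
  have "inj_on ((`) g) E"
    using inj_on_image_Pow[OF embeddingsD[OF assms]] edge_subset by (auto intro: inj_on_subset)
  then show "card (fst (copy_of g)) = card V" "card (snd (copy_of g)) = card E"
    using embeddingsD[OF assms] by (simp_all add: copy_of_def card_image)
qed

lemma connected_copy_of: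
  assumes "g \<in> embeddings n"
  shows "connected_graph (copy_of g)"
proof -
  have path: "(\<lambda>x y. {x, y} \<in> snd (copy_of g))\<^sup>*\<^sup>* (g u) (g w)"
    if "(\<lambda>x y. {x, y} \<in> E)\<^sup>*\<^sup>* u w" for u w
    using that
  proof (induction rule: rtranclp_induct)
    case (step y z)
    have "g ` {y, z} \<in> snd (copy_of g)"
      unfolding copy_of_def snd_conv using step.hyps(2) by (rule imageI)
    with step.IH show ?case by (simp add: rtranclp.rtrancl_into_rtrancl)
  qed simp
  show ?thesis
    unfolding connected_graph_def
  proof (intro conjI ballI)
    show "fst (copy_of g) \<noteq> {}" using card_V_pos by (auto simp: copy_of_def)
    fix x y assume "x \<in> fst (copy_of g)" "y \<in> fst (copy_of g)"
    then obtain u w where "u \<in> V" "w \<in> V" "x = g u" "y = g w" by (auto simp: copy_of_def)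
    with connected path show "(\<lambda>x y. {x, y} \<in> snd (copy_of g))\<^sup>*\<^sup>* x y"
      by (simp add: connected_graph_def)
  qed
qed

lemma is_graph_copy_of:
  assumes "g \<in> embeddings n"
  shows "is_graph (copy_of g)"
proof -
  have "card (g ` e) = 2" if "e \<in> E" for e
    using graph that embeddingsD[OF assms]
    by (metis card_image edge_subset inj_on_subset is_graph_def prod.sel(2))
  then show ?thesis
    using finite_V edge_subset by (auto simp: is_graph_def copy_of_def)
qed

lemma copy_of_in_copies:
  assumes g: "g \<in> embeddings n"
  shows "copy_of g \<in> copies (V, E) n"
proof -
  have "fst (copy_of g) \<subseteq> {1..n}"
    using g by (auto simp: embeddings_def copy_of_def)
  with is_graph_copy_of[OF g] have "subgraph (copy_of g) (complete_graph n)"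
    by (auto simp: subgraph_def complete_graph_def is_graph_def)
  moreover have "graph_iso (V, E) (copy_of g)"
    using inj_on_imp_bij_betw[OF embeddingsD[OF g]] by (auto simp: graph_iso_def copy_of_def)
  ultimately show ?thesis by (simp add: copies_def)
qed

lemma copies_eq_image_embeddings: "copies (V, E) n = copy_of ` embeddings n"
proof
  show "copies (V, E) n \<subseteq> copy_of ` embeddings n"
  proof
    fix G assume "G \<in> copies (V, E) n"
    then obtain f where f: "bij_betw f V (fst G)" "snd G = (`) f ` E"
      and "fst G \<subseteq> {1..n}"
      by (auto simp: copies_def graph_iso_def subgraph_def complete_graph_def)
    then have "restrict f V \<in> embeddings n"
      by (auto simp: embeddings_def bij_betw_def)
    moreover have "copy_of (restrict f V) = G"
    proof -
      have "(`) (restrict f V) ` E = (`) f ` E"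
        using edge_subset by (intro image_cong) auto
      with f show ?thesis by (simp add: copy_of_def bij_betw_def prod_eq_iff)
    qed
    ultimately show "G \<in> copy_of ` embeddings n" by blast
  qed
qed (auto intro: copy_of_in_copies)

lemma finite_copies: "finite (copies (V, E) n)"
  by (simp add: copies_eq_image_embeddings finite_embeddings)

lemma copies_is_graph: "b \<in> copies (V, E) n \<Longrightarrow> is_graph b"
  by (auto simp: copies_eq_image_embeddings is_graph_copy_of)

lemma copies_connected: "b \<in> copies (V, E) n \<Longrightarrow> connected_graph b"
  by (auto simp: copies_eq_image_embeddings connected_copy_of)

lemma copies_card:
  "b \<in> copies (V, E) n \<Longrightarrow> card (fst b) = card V"
  "b \<in> copies (V, E) n \<Longrightarrow> card (snd b) = card E"
  by (auto simp: copies_eq_image_embeddings card_copy_of)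

definition induced_edges :: "'a set \<Rightarrow> 'a set set" where
  "induced_edges K = {e \<in> E. e \<subseteq> K}"

lemma card_induced_edges_le: "card (induced_edges K) \<le> card E"
  using finite_E by (auto simp: induced_edges_def intro: card_mono)

lemma card_induced_edges_le_density:
  assumes "K \<subseteq> V" "K \<noteq> {}"
  shows "real (card (induced_edges K)) \<le> max_density (V, E) * real (card K)"
proof -
  define ratio where "ratio H1 = real (card (snd H1)) / real (card (fst H1))" for H1 :: "'a graph"
  let ?R = "{ratio H1 | H1. subgraph H1 (V, E) \<and> fst H1 \<noteq> {}}"
  have "?R \<subseteq> ratio ` (Pow V \<times> Pow E)"
    by (force simp: subgraph_def)
  then have "finite ?R"
    using finite_V finite_E by (meson finite_Pow_iff finite_SigmaI finite_imageI finite_subset)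
  moreover have "ratio (K, induced_edges K) \<in> ?R"
    using assms edge_subset
    by (intro CollectI exI[of _ "(K, induced_edges K)"]) (auto simp: subgraph_def induced_edges_def)
  ultimately have "ratio (K, induced_edges K) \<le> max_density (V, E)"
    unfolding max_density_def ratio_def[abs_def] by (rule Max_ge)
  moreover have "0 < real (card K)"
    using assms finite_V by (simp add: card_gt_0_iff finite_subset)
  ultimately show ?thesis by (simp add: ratio_def divide_le_eq)
qed

definition extension_sum :: "nat \<Rightarrow> real \<Rightarrow> real \<Rightarrow> nat graph \<Rightarrow> real" where
  "extension_sum n p q G =
     (\<Sum>b\<in>{b \<in> copies (V, E) n. fst b \<inter> fst G \<noteq> {}}. extension_weight p q G b)"

lemma extension_weight_copy_of_le:
  assumes g: "g \<in> embeddings n" and edges: "\<forall>e\<in>snd G. e \<subseteq> fst G"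
    and "0 \<le> p" "p \<le> 1" "0 \<le> q" "q \<le> 1"
  shows "extension_weight p q G (copy_of g)
           \<le> p ^ (card V - card (V \<inter> g -` fst G))
             * q ^ (card E - card (induced_edges (V \<inter> g -` fst G)))"
proof -
  let ?K = "V \<inter> g -` fst G"
  have inj: "inj_on g V" using embeddingsD[OF g] .
  have "fst (copy_of g) - fst G = g ` (V - ?K)" by (auto simp: copy_of_def)
  then have vertices: "card (fst (copy_of g) - fst G) = card V - card ?K"
    using inj finite_V by (simp add: card_image inj_on_diff card_Diff_subset finite_subset)
  have sub: "snd (copy_of g) \<inter> snd G \<subseteq> (`) g ` induced_edges ?K"
  proof
    fix x assume "x \<in> snd (copy_of g) \<inter> snd G"
    then obtain e where "e \<in> E" "x = g ` e" "g ` e \<subseteq> fst G"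
      using edges by (auto simp: copy_of_def)
    then show "x \<in> (`) g ` induced_edges ?K"
      using edge_subset by (auto simp: induced_edges_def)
  qed
  have fin: "finite (induced_edges ?K)" using finite_E by (simp add: induced_edges_def)
  have "card (snd (copy_of g) \<inter> snd G) \<le> card ((`) g ` induced_edges ?K)"
    using sub fin by (intro card_mono) simp_all
  also have "\<dots> \<le> card (induced_edges ?K)" using fin by (rule card_image_le)
  finally have "card (snd (copy_of g) \<inter> snd G) \<le> card (induced_edges ?K)" .
  then have edges: "card E - card (induced_edges ?K) \<le> card (snd (copy_of g) - snd G)"
    using card_copy_of(2)[OF g] card_Diff_subset_Int[of "snd (copy_of g)" "snd G"] finite_E
    by (simp add: copy_of_def)
  show ?thesis
    unfolding extension_weight_def vertices
    using edges assms(3-6) by (intro mult_left_mono power_decreasing) auto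
qed

lemma card_embeddings_vimage_le:
  assumes "K \<subseteq> V" "finite W"
  shows "card {g \<in> embeddings n. V \<inter> g -` W = K} \<le> card W ^ card K * n ^ (card V - card K)"
proof -
  let ?P = "PiE V (\<lambda>x. if x \<in> K then W else {1..n})"
  have "{g \<in> embeddings n. V \<inter> g -` W = K} \<subseteq> ?P"
    by (auto simp: embeddings_def PiE_iff extensional_def)
  then have "card {g \<in> embeddings n. V \<inter> g -` W = K} \<le> card ?P"
    using finite_V assms(2) by (intro card_mono finite_PiE) auto
  also have "card ?P = (\<Prod>x\<in>V. if x \<in> K then card W else n)"
    using finite_V by (simp add: card_PiE if_distrib cong: if_cong)
  also have "\<dots> = card W ^ card K * n ^ (card V - card K)"
    using assms(1) finite_V
    by (simp add: prod.If_cases Int_absorb1 Diff_eq[symmetric] card_Diff_subset finite_subset)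
  finally show ?thesis .
qed

lemma sum_extension_weight_vimage_le:
  assumes "K \<subseteq> V" "finite (fst G)" "card (fst G) \<le> L" "\<forall>e\<in>snd G. e \<subseteq> fst G"
    and "0 \<le> p" "p \<le> 1" "0 \<le> q" "q \<le> 1"
  shows "(\<Sum>g\<in>{g \<in> embeddings n. V \<inter> g -` fst G = K}. extension_weight p q G (copy_of g))
           \<le> real L ^ card K
               * ((real n * p) ^ (card V - card K) * q ^ (card E - card (induced_edges K)))"
proof -
  let ?w = "p ^ (card V - card K) * q ^ (card E - card (induced_edges K))"
  let ?S = "{g \<in> embeddings n. V \<inter> g -` fst G = K}"
  have "(\<Sum>g\<in>?S. extension_weight p q G (copy_of g)) \<le> (\<Sum>g\<in>?S. ?w)"
    using extension_weight_copy_of_le assms(4-8) by (intro sum_mono) blast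
  also have "\<dots> = real (card ?S) * ?w" by simp
  also have "\<dots> \<le> real (card (fst G) ^ card K * n ^ (card V - card K)) * ?w"
    using card_embeddings_vimage_le[OF assms(1,2)] assms(5,7)
    by (intro mult_right_mono) (simp only: of_nat_le_iff, simp)
  also have "\<dots> \<le> real L ^ card K * (real n ^ (card V - card K) * ?w)"
    using assms(3,5,7) by (simp add: mult.assoc mult_right_mono power_mono)
  finally show ?thesis by (simp add: power_mult_distrib mult_ac)
qed

lemma extension_sum_le_sum_subsets:
  assumes "finite (fst G)" "card (fst G) \<le> L" "\<forall>e\<in>snd G. e \<subseteq> fst G"
    and "0 \<le> p" "p \<le> 1" "0 \<le> q" "q \<le> 1"
  shows "extension_sum n p q G \<le> (\<Sum>K\<in>Pow V - {{}}. real L ^ card K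
           * ((real n * p) ^ (card V - card K) * q ^ (card E - card (induced_edges K))))"
proof -
  let ?K = "\<lambda>g. V \<inter> g -` fst G"
  let ?I = "{g \<in> embeddings n. fst (copy_of g) \<inter> fst G \<noteq> {}}"
  let ?ext = "\<lambda>g. extension_weight p q G (copy_of g)"
  have nonneg: "0 \<le> extension_weight p q G b" for b
    using assms by (simp add: extension_weight_nonneg)
  have meet_iff: "fst (copy_of g) \<inter> fst G \<noteq> {} \<longleftrightarrow> ?K g \<noteq> {}" for g
    by (auto simp: copy_of_def)
  have "{b \<in> copies (V, E) n. fst b \<inter> fst G \<noteq> {}} = copy_of ` ?I"
    unfolding copies_eq_image_embeddings by blast
  then have "extension_sum n p q G \<le> (\<Sum>g\<in>?I. ?ext g)"
    unfolding extension_sum_def using sum_image_le[of ?I "extension_weight p q G" copy_of]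
    by (simp add: finite_embeddings nonneg comp_def)
  also have "\<dots> = (\<Sum>K\<in>?K ` ?I. \<Sum>g\<in>{g \<in> ?I. ?K g = K}. ?ext g)"
    by (rule sum.image_gen) (simp add: finite_embeddings)
  also have "\<dots> = (\<Sum>K\<in>?K ` ?I. \<Sum>g\<in>{g \<in> embeddings n. ?K g = K}. ?ext g)"
    by (intro sum.cong) (auto simp: meet_iff)
  also have "\<dots> \<le> (\<Sum>K\<in>Pow V - {{}}. \<Sum>g\<in>{g \<in> embeddings n. ?K g = K}. ?ext g)"
    using finite_V by (intro sum_mono2 sum_nonneg nonneg) (auto simp: meet_iff)
  also have "\<dots> \<le> (\<Sum>K\<in>Pow V - {{}}. real L ^ card K
      * ((real n * p) ^ (card V - card K) * q ^ (card E - card (induced_edges K))))"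
    using assms by (intro sum_mono sum_extension_weight_vimage_le) auto
  finally show ?thesis .
qed

subsection \<open>Lower bounds for \<open>N(2)\<close>\<close>

lemma card_embeddings_ge: "(n - card V) ^ card V \<le> card (embeddings n)"
  using card_inj_funcset_ge[OF finite_V, of "{1..n}"] by (simp add: embeddings_def)

lemma sum_embeddings_le:
  assumes nonneg: "\<And>b. 0 \<le> \<phi> b"
  shows "(\<Sum>g\<in>embeddings n. \<phi> (copy_of g)) \<le> real (card V ^ card V) * (\<Sum>b\<in>copies (V, E) n. \<phi> b)"
proof -
  have fibre: "card {g \<in> embeddings n. copy_of g = b} \<le> card V ^ card V"
    if "b \<in> copies (V, E) n" for b
  proof -
    have "{g \<in> embeddings n. copy_of g = b} \<subseteq> V \<rightarrow>\<^sub>E fst b"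
      by (auto simp: embeddings_def copy_of_def)
    then have "card {g \<in> embeddings n. copy_of g = b} \<le> card (V \<rightarrow>\<^sub>E fst b)"
      using finite_V copies_is_graph[OF that]
      by (intro card_mono finite_PiE) (auto simp: is_graph_def)
    also have "\<dots> = card V ^ card V"
      using finite_V copies_card(1)[OF that] by (simp add: card_funcsetE)
    finally show ?thesis .
  qed
  have "(\<Sum>g\<in>embeddings n. \<phi> (copy_of g))
      = (\<Sum>b\<in>copies (V, E) n. \<Sum>g\<in>{g \<in> embeddings n. copy_of g = b}. \<phi> (copy_of g))"
    unfolding copies_eq_image_embeddings by (rule sum.image_gen[OF finite_embeddings])
  also have "\<dots> = (\<Sum>b\<in>copies (V, E) n. real (card {g \<in> embeddings n. copy_of g = b}) * \<phi> b)"
    by (intro sum.cong refl) simp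
  also have "\<dots> \<le> (\<Sum>b\<in>copies (V, E) n. real (card V ^ card V) * \<phi> b)"
    using fibre nonneg by (intro sum_mono mult_right_mono) (simp_all only: of_nat_le_iff)
  finally show ?thesis by (simp add: sum_distrib_left)
qed

lemma NN_2_ge_copy:
  assumes "b \<in> copies (V, E) n" "0 \<le> p" "0 \<le> q"
  shows "p ^ card V * q ^ card E \<le> NN (V, E) n p q 2"
proof -
  have "p ^ card V * q ^ card E = graph_weight p q (graph_Un b b)"
    using copies_card[OF assms(1)] copies_connected[OF assms(1)]
    by (simp add: graph_weight_def graph_Un_def)
  also have "\<dots> \<le> (\<Sum>b'\<in>copies (V, E) n. graph_weight p q (graph_Un b b'))"
    using assms finite_copies by (intro member_le_sum graph_weight_nonneg)
  also have "\<dots> \<le> NN (V, E) n p q 2"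
    unfolding NN_2_eq using assms finite_copies
    by (intro member_le_sum sum_nonneg graph_weight_nonneg)
  finally show ?thesis .
qed

text \<open>The copies of \<open>f\<close> and of an agreeing \<open>g\<close> share the image of \<open>K\<close> and its induced edges
  and nothing else, so their union has at most \<open>2v - |K|\<close> vertices and \<open>2e - e(K)\<close> edges.\<close>
definition agreeing_embeddings :: "nat \<Rightarrow> 'a set \<Rightarrow> ('a \<Rightarrow> nat) \<Rightarrow> ('a \<Rightarrow> nat) set" where
  "agreeing_embeddings n K f =
     {g \<in> embeddings n. (\<forall>x\<in>K. g x = f x) \<and> g ` (V - K) \<inter> f ` V = {}}"

lemma agreeing_embeddings_extend:
  assumes f: "f \<in> embeddings n" and K: "K \<subseteq> V"
    and h: "h \<in> (V - K) \<rightarrow>\<^sub>E ({1..n} - f ` V)" "inj_on h (V - K)"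
  shows "(\<lambda>x. if x \<in> K then f x else h x) \<in> agreeing_embeddings n K f"
    (is "?g \<in> _")
proof -
  have f_mem: "f \<in> V \<rightarrow>\<^sub>E {1..n}" "inj_on f V" using f by (auto simp: embeddings_def)
  have h_fresh: "h z \<in> {1..n} - f ` V" if "z \<in> V - K" for z using h(1) that by (rule PiE_mem)
  have "?g \<in> V \<rightarrow>\<^sub>E {1..n}"
    using f_mem h K by (auto simp: PiE_iff extensional_def)
  moreover have "inj_on ?g V"
  proof (rule inj_onI)
    fix x y assume xy: "x \<in> V" "y \<in> V" "?g x = ?g y"
    show "x = y"
    proof (cases "x \<in> K"; cases "y \<in> K")
      assume "x \<notin> K" "y \<notin> K"
      then show "x = y" using xy h(2) by (simp add: inj_on_def)
    qed (use xy f_mem(2) h_fresh in \<open>auto dest: inj_onD, metis image_eqI\<close>)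
  qed
  ultimately show ?thesis
    using h by (auto simp: agreeing_embeddings_def embeddings_def PiE_iff)
qed

lemma card_agreeing_embeddings_ge:
  assumes f: "f \<in> embeddings n" and K: "K \<subseteq> V"
  shows "(n - 2 * card V) ^ (card V - card K) \<le> card (agreeing_embeddings n K f)"
proof -
  let ?D = "V - K" and ?T = "{1..n} - f ` V"
  let ?H = "{h \<in> ?D \<rightarrow>\<^sub>E ?T. inj_on h ?D}"
  define extend where "extend h x = (if x \<in> K then f x else h x)" for h :: "'a \<Rightarrow> nat" and x
  have card_T: "card ?T = n - card V"
    using f finite_V by (subst card_Diff_subset) (auto simp: card_image embeddings_def)
  have card_D: "card ?D = card V - card K"
    using K finite_V by (simp add: card_Diff_subset finite_subset)
  have "(n - 2 * card V) ^ (card V - card K) \<le> (card ?T - card ?D) ^ card ?D"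
    unfolding card_T card_D by (intro power_mono) auto
  also have "\<dots> \<le> card ?H"
    using finite_V by (intro card_inj_funcset_ge) auto
  also have "\<dots> \<le> card (agreeing_embeddings n K f)"
  proof (rule card_inj_on_le)
    show "inj_on extend ?H"
    proof (rule inj_onI)
      fix h1 h2 assume H: "h1 \<in> ?H" "h2 \<in> ?H" and eq: "extend h1 = extend h2"
      have "h1 x = h2 x" if "x \<in> ?D" for x
        using fun_cong[OF eq, of x] that by (simp add: extend_def)
      with H show "h1 = h2"
        by (intro PiE_ext[of h1 ?D "\<lambda>_. ?T"]) auto
    qed
    show "extend ` ?H \<subseteq> agreeing_embeddings n K f"
      using agreeing_embeddings_extend[OF f K] by (auto simp: extend_def[abs_def])
    show "finite (agreeing_embeddings n K f)"
      using finite_embeddings by (simp add: agreeing_embeddings_def)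
  qed
  finally show ?thesis .
qed

lemma card_vertices_Un_agreeing_le:
  assumes "K \<subseteq> V" "g \<in> agreeing_embeddings n K f"
  shows "card (fst (graph_Un (copy_of f) (copy_of g))) \<le> 2 * card V - card K"
proof -
  have "fst (graph_Un (copy_of f) (copy_of g)) = f ` V \<union> g ` (V - K)"
    using assms by (auto simp: graph_Un_def copy_of_def agreeing_embeddings_def)
  then have "card (fst (graph_Un (copy_of f) (copy_of g))) \<le> card V + card (V - K)"
    using finite_V card_Un_le[of "f ` V" "g ` (V - K)"]
      card_image_le[of V f] card_image_le[of "V - K" g]
    by simp
  also have "\<dots> = 2 * card V - card K"
    using assms(1) finite_subset[OF assms(1) finite_V] card_mono[OF finite_V assms(1)]
    by (simp add: card_Diff_subset)
  finally show ?thesis .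
qed

lemma card_edges_Un_agreeing_le:
  assumes f: "f \<in> embeddings n" and g: "g \<in> agreeing_embeddings n K f"
  shows "card (snd (graph_Un (copy_of f) (copy_of g))) \<le> 2 * card E - card (induced_edges K)"
proof -
  let ?S = "(`) g ` induced_edges K"
  have g_emb: "g \<in> embeddings n" and agree: "\<forall>x\<in>K. g x = f x"
    using g by (auto simp: agreeing_embeddings_def)
  have "?S \<subseteq> snd (copy_of f)"
    using agree
    by (auto simp: induced_edges_def copy_of_def subset_iff intro!: image_eqI image_cong)
  moreover have S_g: "?S \<subseteq> snd (copy_of g)"
    by (auto simp: induced_edges_def copy_of_def)
  ultimately have "snd (graph_Un (copy_of f) (copy_of g))
                    = snd (copy_of f) \<union> (snd (copy_of g) - ?S)"
    by (auto simp: graph_Un_def)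
  then have "card (snd (graph_Un (copy_of f) (copy_of g)))
               \<le> card E + card (snd (copy_of g) - ?S)"
    using card_Un_le card_copy_of(2)[OF f] by (metis add_le_cancel_right)
  also have "card (snd (copy_of g) - ?S) = card E - card (induced_edges K)"
  proof -
    have "inj_on ((`) g) (induced_edges K)"
      using inj_on_image_Pow[OF embeddingsD[OF g_emb]] edge_subset
      by (auto simp: induced_edges_def intro: inj_on_subset)
    then show ?thesis
      using S_g card_copy_of(2)[OF g_emb] finite_E
      by (simp add: card_Diff_subset card_image copy_of_def finite_subset)
  qed
  also have "card E + (card E - card (induced_edges K)) = 2 * card E - card (induced_edges K)"
    using card_induced_edges_le[of K] by simp
  finally show ?thesis .
qed

lemma graph_weight_agreeing_ge:
  assumes f: "f \<in> embeddings n" and K: "K \<subseteq> V" "K \<noteq> {}"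
    and g: "g \<in> agreeing_embeddings n K f"
    and "0 \<le> p" "p \<le> 1" "0 \<le> q" "q \<le> 1"
  shows "p ^ (2 * card V - card K) * q ^ (2 * card E - card (induced_edges K))
           \<le> graph_weight p q (graph_Un (copy_of f) (copy_of g))"
proof -
  have g_emb: "g \<in> embeddings n" and agree: "\<forall>x\<in>K. g x = f x"
    using g by (auto simp: agreeing_embeddings_def)
  obtain x0 where "x0 \<in> K" using K by auto
  then have "f x0 \<in> fst (copy_of f) \<inter> fst (copy_of g)"
    using K agree by (auto simp: copy_of_def intro!: image_eqI[of _ _ x0])
  then have "connected_graph (graph_Un (copy_of f) (copy_of g))"
    using connected_copy_of f g_emb by (intro connected_graph_Un) auto
  then show ?thesis
    using card_vertices_Un_agreeing_le[OF K(1) g] card_edges_Un_agreeing_le[OF f g] assms(5-8)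
    unfolding graph_weight_def by (simp add: mult_mono power_decreasing)
qed

lemma sum_graph_weight_Un_copy_of_ge:
  assumes f: "f \<in> embeddings n" and K: "K \<subseteq> V" "K \<noteq> {}"
    and "0 \<le> p" "p \<le> 1" "0 \<le> q" "q \<le> 1"
  shows "real (n - 2 * card V) ^ (card V - card K)
           * (p ^ (2 * card V - card K) * q ^ (2 * card E - card (induced_edges K)))
         \<le> (\<Sum>g\<in>embeddings n. graph_weight p q (graph_Un (copy_of f) (copy_of g)))"
proof -
  let ?w = "p ^ (2 * card V - card K) * q ^ (2 * card E - card (induced_edges K))"
  let ?W = "\<lambda>g. graph_weight p q (graph_Un (copy_of f) (copy_of g))"
  have "real (n - 2 * card V) ^ (card V - card K) * ?w
      \<le> real (card (agreeing_embeddings n K f)) * ?w"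
    using card_agreeing_embeddings_ge[OF f K(1)] assms(4,6)
    by (intro mult_right_mono) (simp_all flip: of_nat_power)
  also have "\<dots> = (\<Sum>g\<in>agreeing_embeddings n K f. ?w)" by simp
  also have "\<dots> \<le> (\<Sum>g\<in>agreeing_embeddings n K f. ?W g)"
    using graph_weight_agreeing_ge[OF f K] assms(4-7) by (intro sum_mono) simp
  also have "\<dots> \<le> (\<Sum>g\<in>embeddings n. ?W g)"
    using assms(4,6)
    by (intro sum_mono2 finite_embeddings graph_weight_nonneg) (auto simp: agreeing_embeddings_def)
  finally show ?thesis .
qed

lemma sum_embedding_pairs_le_NN_2:
  assumes "0 \<le> p" "0 \<le> q"
  shows "(\<Sum>f\<in>embeddings n. \<Sum>g\<in>embeddings n. graph_weight p q (graph_Un (copy_of f) (copy_of g)))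
           \<le> real (card V ^ card V) ^ 2 * NN (V, E) n p q 2"
proof -
  let ?c = "real (card V ^ card V)"
  let ?W = "\<lambda>a b. graph_weight p q (graph_Un a b)"
  have W: "0 \<le> ?W a b" for a b using assms by (simp add: graph_weight_nonneg)
  have "(\<Sum>f\<in>embeddings n. \<Sum>g\<in>embeddings n. ?W (copy_of f) (copy_of g))
      \<le> (\<Sum>f\<in>embeddings n. ?c * (\<Sum>b\<in>copies (V, E) n. ?W (copy_of f) b))"
    using W by (intro sum_mono sum_embeddings_le)
  also have "\<dots> = ?c * (\<Sum>f\<in>embeddings n. (\<lambda>a. \<Sum>b\<in>copies (V, E) n. ?W a b) (copy_of f))"
    by (simp add: sum_distrib_left)
  also have "\<dots> \<le> ?c * (?c * (\<Sum>a\<in>copies (V, E) n. \<Sum>b\<in>copies (V, E) n. ?W a b))"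
    using W by (intro mult_left_mono sum_embeddings_le sum_nonneg) auto
  finally show ?thesis by (simp add: NN_2_eq power2_eq_square mult_ac)
qed

lemma NN_2_ge_overlapping_pairs:
  assumes K: "K \<subseteq> V" "K \<noteq> {}" and "0 \<le> p" "p \<le> 1" "0 \<le> q" "q \<le> 1"
  shows "real (n - 2 * card V) ^ (2 * card V - card K)
           * (p ^ (2 * card V - card K) * q ^ (2 * card E - card (induced_edges K)))
         \<le> real (card V ^ card V) ^ 2 * NN (V, E) n p q 2"
proof -
  let ?w = "p ^ (2 * card V - card K) * q ^ (2 * card E - card (induced_edges K))"
  let ?m = "real (n - 2 * card V)"
  have "(n - 2 * card V) ^ card V \<le> (n - card V) ^ card V"
    by (intro power_mono) auto
  also have "\<dots> \<le> card (embeddings n)" by (rule card_embeddings_ge)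
  finally have embeddings: "?m ^ card V \<le> real (card (embeddings n))"
    by (simp flip: of_nat_power)
  have "?m ^ (2 * card V - card K) * ?w = ?m ^ card V * (?m ^ (card V - card K) * ?w)"
    using card_mono[OF finite_V K(1)] by (simp add: power_add[symmetric] mult_2)
  also have "\<dots> \<le> real (card (embeddings n)) * (?m ^ (card V - card K) * ?w)"
    using embeddings assms(3,5) by (intro mult_right_mono) simp_all
  also have "\<dots> = (\<Sum>f\<in>embeddings n. ?m ^ (card V - card K) * ?w)" by simp
  also have "\<dots> \<le> (\<Sum>f\<in>embeddings n. \<Sum>g\<in>embeddings n.
                       graph_weight p q (graph_Un (copy_of f) (copy_of g)))"
    by (intro sum_mono sum_graph_weight_Un_copy_of_ge[OF _ K assms(3-6)])
  also have "\<dots> \<le> real (card V ^ card V) ^ 2 * NN (V, E) n p q 2"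
    using assms(3,5) by (rule sum_embedding_pairs_le_NN_2)
  finally show ?thesis .
qed

lemma overlap_weight_le_NN_2_small:
  assumes K: "K \<subseteq> V" and b: "b \<in> copies (V, E) n" and n: "n < 4 * card V"
    and pq: "0 \<le> p" "p \<le> 1" "0 \<le> q" "q \<le> 1"
  shows "real n ^ (2 * card V - card K)
           * (p ^ (2 * card V - card K) * q ^ (2 * card E - card (induced_edges K)))
         \<le> real ((4 * card V) ^ (2 * card V)) * NN (V, E) n p q 2"
proof -
  let ?j = "2 * card V - card K"
  have j: "card V \<le> ?j" "?j \<le> 2 * card V"
    using card_mono[OF finite_V K] by auto
  have "real n ^ ?j \<le> real (4 * card V) ^ ?j"
    using n by (intro power_mono) auto
  also have "\<dots> \<le> real (4 * card V) ^ (2 * card V)"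
    using j card_V_pos by (intro power_increasing) auto
  finally have "real n ^ ?j \<le> real ((4 * card V) ^ (2 * card V))" by simp
  moreover have "p ^ ?j * q ^ (2 * card E - card (induced_edges K)) \<le> p ^ card V * q ^ card E"
    using j pq card_induced_edges_le[of K] by (intro mult_mono power_decreasing) auto
  moreover have "p ^ card V * q ^ card E \<le> NN (V, E) n p q 2"
    using NN_2_ge_copy[OF b] pq by simp
  ultimately show ?thesis
    using pq by (intro mult_mono) auto
qed

lemma overlap_weight_le_NN_2_large:
  assumes K: "K \<subseteq> V" "K \<noteq> {}" and n: "4 * card V \<le> n"
    and pq: "0 \<le> p" "p \<le> 1" "0 \<le> q" "q \<le> 1"
  shows "real n ^ (2 * card V - card K)
           * (p ^ (2 * card V - card K) * q ^ (2 * card E - card (induced_edges K)))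
         \<le> real ((4 * card V) ^ (2 * card V)) * NN (V, E) n p q 2"
proof -
  let ?j = "2 * card V - card K"
  let ?w = "p ^ ?j * q ^ (2 * card E - card (induced_edges K))"
  let ?c = "real (card V ^ card V)"
  have "real n \<le> 2 * real (n - 2 * card V)" using n by linarith
  then have "real n ^ ?j \<le> 2 ^ ?j * real (n - 2 * card V) ^ ?j"
    by (metis of_nat_0_le_iff power_mono power_mult_distrib)
  moreover have "0 \<le> ?w" using pq by simp
  ultimately have "real n ^ ?j * ?w \<le> 2 ^ ?j * (real (n - 2 * card V) ^ ?j * ?w)"
    by (metis mult.assoc mult_right_mono)
  also have "\<dots> \<le> 2 ^ ?j * (?c ^ 2 * NN (V, E) n p q 2)"
    using NN_2_ge_overlapping_pairs[OF K pq] by simp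
  also have "\<dots> \<le> real ((4 * card V) ^ (2 * card V)) * NN (V, E) n p q 2"
  proof -
    have "(2::real) ^ ?j \<le> 2 ^ (2 * (2 * card V))" by (intro power_increasing) auto
    then have "2 ^ ?j * ?c ^ 2 \<le> 4 ^ (2 * card V) * ?c ^ 2"
      by (simp add: power_mult mult_right_mono)
    also have "\<dots> = real ((4 * card V) ^ (2 * card V))"
      by (simp add: power_mult_distrib power_mult[symmetric] mult.commute)
    finally have "2 ^ ?j * ?c ^ 2 \<le> real ((4 * card V) ^ (2 * card V))" .
    then show ?thesis
      using NN_nonneg[OF pq(1,3), of "(V, E)" n 2] by (metis mult.assoc mult_right_mono)
  qed
  finally show ?thesis .
qed

lemma overlap_weight_le_NN_2:
  assumes K: "K \<subseteq> V" "K \<noteq> {}" and b: "b \<in> copies (V, E) n"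
    and pq: "0 \<le> p" "p \<le> 1" "0 \<le> q" "q \<le> 1"
  shows "(real n * p) ^ (2 * card V - card K) * q ^ (2 * card E - card (induced_edges K))
           \<le> real ((4 * card V) ^ (2 * card V)) * NN (V, E) n p q 2"
  using overlap_weight_le_NN_2_small[OF K(1) b _ pq] overlap_weight_le_NN_2_large[OF K _ pq]
  by (cases "n < 4 * card V") (simp_all add: power_mult_distrib mult.assoc)

text \<open>This is where the maximal density enters: \<open>e(K) \<le> m(H) |K|\<close> gives \<open>X \<le> (np)^|K| q^e(K)\<close>.\<close>
lemma extension_term_sq_le:
  assumes K: "K \<subseteq> V" "K \<noteq> {}" and q: "0 < q" "q < 1"
    and X: "1 \<le> real n * p * q powr max_density (V, E)"
  shows "((real n * p) ^ (card V - card K) * q ^ (card E - card (induced_edges K)))\<^sup>2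
           * (real n * p * q powr max_density (V, E))
         \<le> (real n * p) ^ (2 * card V - card K) * q ^ (2 * card E - card (induced_edges K))"
proof -
  let ?a = "real n * p" and ?k = "card K" and ?l = "card (induced_edges K)"
  have k: "1 \<le> ?k" "?k \<le> card V"
    using K finite_V by (auto simp: Suc_le_eq card_gt_0_iff finite_subset card_mono)
  have "?a * q powr max_density (V, E) \<le> ?a ^ ?k * q ^ ?l"
    using card_induced_edges_le_density[OF K]
    by (intro powr_density_le_power[OF q X k(1)]) (simp add: mult.commute)
  then have "(?a ^ (card V - ?k) * q ^ (card E - ?l))\<^sup>2 * (?a * q powr max_density (V, E))
      \<le> (?a ^ (card V - ?k) * q ^ (card E - ?l))\<^sup>2 * (?a ^ ?k * q ^ ?l)"
    by (rule mult_left_mono) simp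
  also have "\<dots> = ?a ^ (2 * (card V - ?k) + ?k) * q ^ (2 * (card E - ?l) + ?l)"
    by (simp add: power_add power_even_eq power_mult_distrib mult_ac)
  also have "2 * (card V - ?k) + ?k = 2 * card V - ?k" using k by simp
  also have "2 * (card E - ?l) + ?l = 2 * card E - ?l" using card_induced_edges_le[of K] by simp
  finally show ?thesis .
qed

lemma extension_term_le_sqrt:
  assumes K: "K \<subseteq> V" "K \<noteq> {}" and b: "b \<in> copies (V, E) n"
    and p: "0 < p" "p < 1" and q: "0 < q" "q < 1"
    and X: "1 \<le> real n * p * q powr max_density (V, E)"
  shows "(real n * p) ^ (card V - card K) * q ^ (card E - card (induced_edges K))
           \<le> sqrt (real ((4 * card V) ^ (2 * card V)) * NN (V, E) n p q 2
                     / (real n * p * q powr max_density (V, E)))"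
proof (rule real_le_rsqrt)
  let ?x = "(real n * p) ^ (card V - card K) * q ^ (card E - card (induced_edges K))"
  have "?x\<^sup>2 * (real n * p * q powr max_density (V, E))
      \<le> (real n * p) ^ (2 * card V - card K) * q ^ (2 * card E - card (induced_edges K))"
    by (rule extension_term_sq_le[OF K q X])
  also have "\<dots> \<le> real ((4 * card V) ^ (2 * card V)) * NN (V, E) n p q 2"
    using p q by (intro overlap_weight_le_NN_2[OF K b]) auto
  finally show "?x\<^sup>2 \<le> real ((4 * card V) ^ (2 * card V)) * NN (V, E) n p q 2
                      / (real n * p * q powr max_density (V, E))"
    using X by (simp add: le_divide_eq)
qed

lemma extension_sum_le_sqrt:
  assumes G: "finite (fst G)" "card (fst G) \<le> L" "1 \<le> L" "\<forall>e\<in>snd G. e \<subseteq> fst G"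
    and p: "0 < p" "p < 1" and q: "0 < q" "q < 1"
    and X: "1 \<le> real n * p * q powr max_density (V, E)"
  shows "extension_sum n p q G \<le> 2 ^ card V * real L ^ card V
           * sqrt (real ((4 * card V) ^ (2 * card V)) * NN (V, E) n p q 2
                   / (real n * p * q powr max_density (V, E)))"
    (is "_ \<le> _ * ?s")
proof (cases "copies (V, E) n = {}")
  case True
  have "0 \<le> ?s" using p q X by (simp add: NN_nonneg)
  with True show ?thesis by (simp add: extension_sum_def)
next
  case False
  then obtain b where b: "b \<in> copies (V, E) n" by blast
  let ?x = "\<lambda>K. (real n * p) ^ (card V - card K) * q ^ (card E - card (induced_edges K))"
  have x: "?x K \<le> ?s" if "K \<subseteq> V" "K \<noteq> {}" for K
    by (rule extension_term_le_sqrt[OF that b p q X])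
  have "extension_sum n p q G \<le> (\<Sum>K\<in>Pow V - {{}}. real L ^ card K * ?x K)"
    using G p q by (intro extension_sum_le_sum_subsets) auto
  also have "\<dots> \<le> (\<Sum>K\<in>Pow V - {{}}. real L ^ card V * ?s)"
  proof (intro sum_mono mult_mono)
    fix K assume "K \<in> Pow V - {{}}"
    then show "real L ^ card K \<le> real L ^ card V" "?x K \<le> ?s"
      using x G(3) finite_V by (auto intro: power_increasing card_mono)
  qed (use p q in auto)
  also have "\<dots> = real (card (Pow V - {{}})) * (real L ^ card V * ?s)" by simp
  also have "\<dots> \<le> 2 ^ card V * (real L ^ card V * ?s)"
  proof (rule mult_right_mono)
    have "card (Pow V - {{}}) \<le> card (Pow V)"
      using finite_V by (intro card_mono) auto
    then show "real (card (Pow V - {{}})) \<le> 2 ^ card V"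
      using finite_V by (simp add: card_Pow)
    show "0 \<le> real L ^ card V * ?s" using p q X by (simp add: NN_nonneg)
  qed
  finally show ?thesis by (simp add: mult.assoc)
qed

subsection \<open>From \<open>r\<close> copies to \<open>r - 1\<close> copies\<close>

lemma card_vertices_graph_UN_copies:
  assumes "finite A" "F \<in> PiE A (\<lambda>_. copies (V, E) n)"
  shows "card (fst (graph_UN A F)) \<le> card A * card V"
proof -
  have "card (fst (graph_UN A F)) \<le> (\<Sum>i\<in>A. card (fst (F i)))"
    using assms(1) by (simp add: graph_UN_def card_UN_le)
  also have "\<dots> = (\<Sum>i\<in>A. card V)"
    using copies_card(1)[OF PiE_mem[OF assms(2)]] by (intro sum.cong) auto
  also have "\<dots> = card A * card V" by simp
  finally show ?thesis .
qed

text \<open>Splitting off the copy \<open>F a\<close> of a tuple: the remaining copies contribute their own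
  weight, \<open>F a\<close> only an extension weight.\<close>
lemma sum_leaf_le:
  assumes "finite A" "a \<in> A" "0 \<le> p" "0 \<le> q"
    and bound: "\<And>G. is_graph G \<Longrightarrow> card (fst G) \<le> (card A - 1) * card V \<Longrightarrow> extension_sum n p q G \<le> B"
  shows "(\<Sum>F\<in>PiE A (\<lambda>_. copies (V, E) n).
            if connected_graph (graph_UN (A - {a}) F) \<and> fst (F a) \<inter> fst (graph_UN (A - {a}) F) \<noteq> {}
            then graph_weight p q (graph_UN A F) else 0)
         \<le> NN (V, E) n p q (card A - 1) * B"
proof -
  let ?C = "copies (V, E) n" and ?A = "A - {a}"
  let ?ext = "\<lambda>G y. if fst y \<inter> fst G \<noteq> {} then extension_weight p q G y else 0"
  have A: "finite ?A" "card ?A = card A - 1"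
    using assms(1,2) by auto
  have G: "is_graph (graph_UN ?A G)" "card (fst (graph_UN ?A G)) \<le> (card A - 1) * card V"
    if "G \<in> PiE ?A (\<lambda>_. ?C)" for G
    using card_vertices_graph_UN_copies[OF A(1) that] A(2)
    by (auto intro!: is_graph_graph_UN A(1) copies_is_graph[OF PiE_mem[OF that]])
  have "(\<Sum>F\<in>PiE A (\<lambda>_. ?C).
            if connected_graph (graph_UN ?A F) \<and> fst (F a) \<inter> fst (graph_UN ?A F) \<noteq> {}
            then graph_weight p q (graph_UN A F) else 0)
      = (\<Sum>y\<in>?C. \<Sum>G\<in>PiE ?A (\<lambda>_. ?C).
            if connected_graph (graph_UN ?A G) \<and> fst y \<inter> fst (graph_UN ?A G) \<noteq> {}
            then graph_weight p q (graph_Un y (graph_UN ?A G)) else 0)"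
    using assms(2)
    by (simp add: sum_PiE_remove[of a] graph_UN_fun_upd_remove graph_UN_fun_upd cong: if_cong)
  also have "\<dots> \<le> (\<Sum>y\<in>?C. \<Sum>G\<in>PiE ?A (\<lambda>_. ?C).
                       graph_weight p q (graph_UN ?A G) * ?ext (graph_UN ?A G) y)"
    using G assms(3,4) copies_is_graph
    by (intro sum_mono)
       (auto intro: graph_weight_graph_Un_le simp: graph_weight_nonneg extension_weight_nonneg)
  also have "\<dots> = (\<Sum>G\<in>PiE ?A (\<lambda>_. ?C).
                       graph_weight p q (graph_UN ?A G) * extension_sum n p q (graph_UN ?A G))"
    by (subst sum.swap)
       (simp add: extension_sum_def sum_distrib_left sum.inter_filter finite_copies)
  also have "\<dots> \<le> (\<Sum>G\<in>PiE ?A (\<lambda>_. ?C). graph_weight p q (graph_UN ?A G) * B)"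
    using G bound assms(3,4) by (intro sum_mono mult_left_mono graph_weight_nonneg) auto
  also have "\<dots> = NN (V, E) n p q (card A - 1) * B"
    unfolding NN_eq_sum_PiE[OF A] by (simp add: sum_distrib_right)
  finally show ?thesis .
qed

text \<open>Each connected union of \<open>r\<close> copies is charged to one of its leaf copies.\<close>
lemma NN_le_extension_bound:
  assumes r: "2 \<le> r" and "0 \<le> p" "0 \<le> q"
    and bound: "\<And>G. is_graph G \<Longrightarrow> card (fst G) \<le> (r - 1) * card V \<Longrightarrow> extension_sum n p q G \<le> B"
  shows "NN (V, E) n p q r \<le> real r * NN (V, E) n p q (r - 1) * B"
proof -
  let ?C = "copies (V, E) n"
  let ?leaf = "\<lambda>a F. if connected_graph (graph_UN ({..<r} - {a}) F)
                          \<and> fst (F a) \<inter> fst (graph_UN ({..<r} - {a}) F) \<noteq> {}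
                       then graph_weight p q (graph_UN {..<r} F) else 0"
  have leaf_nonneg: "0 \<le> ?leaf a F" for a F
    using assms(2,3) by (simp add: graph_weight_nonneg)
  have "graph_weight p q (graph_UN {..<r} F) \<le> (\<Sum>a<r. ?leaf a F)"
    if F: "F \<in> PiE {..<r} (\<lambda>_. ?C)" for F
  proof (cases "connected_graph (graph_UN {..<r} F)")
    case True
    have "connected_graph (F i)" if "i \<in> {..<r}" for i
      using copies_connected[OF PiE_mem[OF F that]] .
    moreover have "e \<subseteq> fst (F c)" if "c \<in> {..<r}" "e \<in> snd (F c)" for c e
      using copies_is_graph[OF PiE_mem[OF F that(1)]] that(2) unfolding is_graph_def by blast
    ultimately obtain a where "a \<in> {..<r}" "connected_graph (graph_UN ({..<r} - {a}) F)"
      "fst (F a) \<inter> fst (graph_UN ({..<r} - {a}) F) \<noteq> {}"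
      using connected_graph_UN_leaf[of "{..<r}" F] r True by auto
    then have "?leaf a F = graph_weight p q (graph_UN {..<r} F)" by simp
    moreover have "?leaf a F \<le> (\<Sum>a<r. ?leaf a F)"
      using \<open>a \<in> {..<r}\<close> by (intro member_le_sum leaf_nonneg) simp_all
    ultimately show ?thesis by simp
  qed (simp add: graph_weight_def sum_nonneg leaf_nonneg)
  then have "NN (V, E) n p q r \<le> (\<Sum>F\<in>PiE {..<r} (\<lambda>_. ?C). \<Sum>a<r. ?leaf a F)"
    unfolding NN_eq_sum_graph_weight by (rule sum_mono)
  also have "\<dots> = (\<Sum>a<r. \<Sum>F\<in>PiE {..<r} (\<lambda>_. ?C). ?leaf a F)"
    by (rule sum.swap)
  also have "\<dots> \<le> (\<Sum>a<r. NN (V, E) n p q (r - 1) * B)"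
    using sum_leaf_le[of "{..<r}"] bound assms(2,3) by (intro sum_mono) simp
  finally show ?thesis by simp
qed

end

theorem lemma6p2:
  fixes H :: "'a graph" and r :: nat
  assumes "is_graph H" and "connected_graph H" and "r \<ge> 2"
  shows "\<exists>C>0. \<forall>(n::nat) (p::real) (q::real).
           0 < p \<and> p < 1 \<and> 0 < q \<and> q < 1 \<and> real n * p * q powr max_density H \<ge> 1 \<longrightarrow>
           NN H n p q r \<le> C * NN H n p q (r - 1) * sqrt (NN H n p q 2)
                          * (real n * p * q powr max_density H) powr (-1/2)"
proof -
  obtain V E where H: "H = (V, E)" by fastforce
  interpret pattern_graph V E
    using assms(1,2) by unfold_locales (simp_all add: H)
  let ?L = "(r - 1) * card V"
  define C where
    "C = real r * 2 ^ card V * real ?L ^ card V * sqrt (real ((4 * card V) ^ (2 * card V)))"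
  have "1 \<le> ?L" using assms(3) card_V_pos by simp
  then have "0 < C" using assms(3) by (simp add: C_def)
  moreover have "NN H n p q r \<le> C * NN H n p q (r - 1) * sqrt (NN H n p q 2)
                                    * (real n * p * q powr max_density H) powr (-1/2)"
    if p: "0 < p" "p < 1" and q: "0 < q" "q < 1"
      and X: "1 \<le> real n * p * q powr max_density H" for n p q
  proof -
    let ?X = "real n * p * q powr max_density H"
    have "NN H n p q r \<le> real r * NN H n p q (r - 1) * (2 ^ card V * real ?L ^ card V
            * sqrt (real ((4 * card V) ^ (2 * card V)) * NN H n p q 2 / ?X))"
      unfolding H using assms(3) p q \<open>1 \<le> ?L\<close> X
      by (intro NN_le_extension_bound extension_sum_le_sqrt) (auto simp: H is_graph_def)
    also have "\<dots> = C * NN H n p q (r - 1) * sqrt (NN H n p q 2) * ?X powr (-1/2)"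
      using X by (simp add: C_def real_sqrt_mult real_sqrt_divide powr_minus_divide powr_half_sqrt)
    finally show ?thesis .
  qed
  ultimately show ?thesis by blast
qed

end
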